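(* Let $D$ be a knot diagram and let $D'$ be the knot diagram obtained from $D$ by increasing the number of full twists in some twist region of $D$. Then $D$ is in straight position if and only if $D'$ is in straight position.
   Context: A knot diagram is in straight position if the knot can be decomposed into two sub-arcs such that each sub-arc never crosses itself (equivalently, there is an arc of the knot that passes through every crossing of the diagram without meeting itself at a crossing). A twist region of a diagram consists of a maximal collection of bigon regions arranged end to end; a single crossing adjacent to no bigons is also a twist region. Increasing the number of full twists of a twist region means adding an even number of alternating crossings to the twist region in such a way that no new crossings can be removed by Reidemeister type 2 moves. *)

theory Defs
  imports Main
begin

text \<open>A knot diagram (on the sphere, equivalently in the plane) with n crossings is encoded by
its signed Gauss code: traversing the (oriented) knot from a base point we obtain a cyclic word of
length 2n; each entry is (crossing label, whether this passage is the over-passage, whether the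
crossing is positive).

Position i of the word is a visit of the curve to crossing lbl D i; edge i of the diagram runs
from position i to position (i+1) mod 2n. A dart (i,True) is the half-edge leaving position i
(along edge i), a dart (i,False) the half-edge arriving at position i (along edge i-1).
The crossing sign determines the cyclic (counter-clockwise) order of the four half-edges around
the crossing (rotation drot); the edge involution is dalpha. Faces of the induced embedding of the
4-valent shadow are the orbits of dphi = drot o dalpha, and the code is realised by a diagram on
the sphere iff Euler's formula V - E + F = 2 holds, i.e. F = n + 2.\<close>

type_synonym gcode = "(nat \<times> bool \<times> bool) list"
type_synonym dart = "nat \<times> bool"

definition lbl :: "gcode \<Rightarrow> nat \<Rightarrow> nat" where
  "lbl D i = fst (D ! i)"

definition is_over :: "gcode \<Rightarrow> nat \<Rightarrow> bool" where
  "is_over D i = fst (snd (D ! i))"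

definition is_pos :: "gcode \<Rightarrow> nat \<Rightarrow> bool" where
  "is_pos D i = snd (snd (D ! i))"

definition crossings :: "gcode \<Rightarrow> nat set" where
  "crossings D = fst ` set D"

definition knot_code :: "gcode \<Rightarrow> bool" where
  "knot_code D \<longleftrightarrow>
     (\<forall>x\<in>crossings D. card {i. i < length D \<and> lbl D i = x} = 2) \<and>
     (\<forall>i<length D. \<forall>j<length D. i \<noteq> j \<and> lbl D i = lbl D j \<longrightarrow>
          is_over D i \<noteq> is_over D j \<and> is_pos D i = is_pos D j)"

definition partner :: "gcode \<Rightarrow> nat \<Rightarrow> nat" where
  "partner D i = (THE j. j < length D \<and> j \<noteq> i \<and> lbl D j = lbl D i)"

definition darts :: "gcode \<Rightarrow> dart set" where
  "darts D = {0..<length D} \<times> UNIV"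

definition dalpha :: "gcode \<Rightarrow> dart \<Rightarrow> dart" where
  "dalpha D = (\<lambda>(i, b). if b then ((i + 1) mod length D, False)
                          else ((i + length D - 1) mod length D, True))"

definition drot :: "gcode \<Rightarrow> dart \<Rightarrow> dart" where
  "drot D = (\<lambda>(i, b). (partner D i, if is_pos D i = is_over D i then b else \<not> b))"

definition dphi :: "gcode \<Rightarrow> dart \<Rightarrow> dart" where
  "dphi D = drot D \<circ> dalpha D"

definition face :: "gcode \<Rightarrow> dart \<Rightarrow> dart set" where
  "face D d = {(dphi D ^^ k) d | k. True}"

definition faces :: "gcode \<Rightarrow> dart set set" where
  "faces D = face D ` darts D"

definition knot_diagram :: "gcode \<Rightarrow> bool" where
  "knot_diagram D \<longleftrightarrow> knot_code D \<and>
     (D = [] \<or> card (faces D) = card (crossings D) + 2)"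

text \<open>The knot splits (at two points off the crossings) into two sub-arcs, neither of which
passes through a crossing twice: a cyclic rotation of the Gauss word splits as A @ B with no
repeated crossing in A nor in B.\<close>

definition straight_position :: "gcode \<Rightarrow> bool" where
  "straight_position D \<longleftrightarrow>
     (\<exists>k A B. rotate k D = A @ B \<and> distinct (map fst A) \<and> distinct (map fst B))"

definition dart_crossing :: "gcode \<Rightarrow> dart \<Rightarrow> nat" where
  "dart_crossing D d = lbl D (fst d)"

definition dedge :: "gcode \<Rightarrow> dart \<Rightarrow> nat" where
  "dedge D = (\<lambda>(i, b). if b then i else (i + length D - 1) mod length D)"

definition is_bigon :: "gcode \<Rightarrow> dart set \<Rightarrow> bool" where
  "is_bigon D F \<longleftrightarrow> F \<in> faces D \<and> card F = 2 \<and> card (dart_crossing D ` F) = 2"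

definition bigon_adj :: "gcode \<Rightarrow> nat \<Rightarrow> nat \<Rightarrow> bool" where
  "bigon_adj D x y \<longleftrightarrow> x \<noteq> y \<and> (\<exists>F. is_bigon D F \<and> dart_crossing D ` F = {x, y})"

text \<open>A twist region: a maximal collection of bigons arranged end to end, given by its set of
crossings (a class of crossings connected through bigons; a crossing meeting no bigon forms a
twist region by itself).\<close>
definition twist_region :: "gcode \<Rightarrow> nat set \<Rightarrow> bool" where
  "twist_region D T \<longleftrightarrow> (\<exists>x\<in>crossings D. T = {y. (bigon_adj D)\<^sup>*\<^sup>* x y})"

text \<open>a bigon that can be removed by a Reidemeister II move: one strand over at both ends\<close>
definition r2_bigon :: "gcode \<Rightarrow> dart set \<Rightarrow> bool" where
  "r2_bigon D F \<longleftrightarrow> is_bigon D F \<and>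
     (\<exists>d\<in>F. is_over D (dedge D d) = is_over D ((dedge D d + 1) mod length D))"

definition ins2 :: "nat \<Rightarrow> 'a list \<Rightarrow> nat \<Rightarrow> 'a list \<Rightarrow> 'a list \<Rightarrow> 'a list" where
  "ins2 g1 A1 g2 A2 L =
    (if g1 \<le> g2 then take g1 L @ A1 @ take (g2 - g1) (drop g1 L) @ A2 @ drop g2 L
     else take g2 L @ A2 @ take (g1 - g2) (drop g2 L) @ A1 @ drop g1 L)"

text \<open>Twist the two edges bounding the corner (d, drot D d) at the crossing of d around each
other, creating new crossings Y!0, Y!1, ... (in order of distance from the corner) along both
edges, with alternating over/under along each strand (continuing the alternation from the
corner crossing), and with the sign of the corner crossing (forced by the geometry).\<close>
definition add_twists :: "gcode \<Rightarrow> dart \<Rightarrow> nat list \<Rightarrow> gcode" where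
  "add_twists D d Y =
    (let p = fst d; c = drot D d; ov = is_over D p; s = is_pos D p;
         Le = map (\<lambda>k. (Y ! k, ov = odd k, s)) [0..<length Y];
         Lf = map (\<lambda>k. (Y ! k, \<not> (ov = odd k), s)) [0..<length Y];
         Ae = (if snd d then Le else rev Le);
         Af = (if snd c then Lf else rev Lf)
     in ins2 (dedge D d + 1) Ae (dedge D c + 1) Af D)"

text \<open>D' arises from D by adding m \<ge> 1 full twists (2m alternating crossings) to a twist region,
so that no new crossing can be removed by a Reidemeister II move. The twisting happens at a
corner of a crossing of the region which is a bigon of the region or opposite such a bigon (for
a crossing meeting no bigon, any corner).\<close>
definition twist_increase :: "gcode \<Rightarrow> gcode \<Rightarrow> bool" where
  "twist_increase D D' \<longleftrightarrow>
    (\<exists>T d Y m. twist_region D T \<and> d \<in> darts D \<and> dart_crossing D d \<in> T \<and>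
       m \<ge> 1 \<and> length Y = 2 * m \<and> distinct Y \<and> set Y \<inter> crossings D = {} \<and>
       dedge D d \<noteq> dedge D (drot D d) \<and>
       (is_bigon D (face D (drot D d)) \<or> is_bigon D (face D ((drot D ^^ 3) d)) \<or>
        \<not> (\<exists>y. bigon_adj D (dart_crossing D d) y)) \<and>
       D' = add_twists D d Y \<and>
       (\<forall>F. r2_bigon D' F \<longrightarrow> dart_crossing D' ` F \<inter> set Y = {}))"

end

theory Submission
  imports Defs
begin

text \<open>Straightness only depends on the cyclic word of crossing labels: it asks for a split
  xs = P @ Q @ R with Q and R @ P repetition-free. Adding twists inserts the same fresh labels
  on the two edges bounding a corner of a crossing x. Each inserted block can join the arc
  containing the neighbouring visit of x; since the two visits of x lie on different arcs, every
  new crossing is then visited once on each arc. Conversely, deleting the new labels from a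
  straight split of the twisted word leaves a straight split of the original one.\<close>

definition insert_at :: "nat \<Rightarrow> 'a list \<Rightarrow> 'a list \<Rightarrow> 'a list" where
  "insert_at g ys xs = take g xs @ ys @ drop g xs"

lemma length_insert_at: "g \<le> length xs \<Longrightarrow> length (insert_at g ys xs) = length ys + length xs"
  by (simp add: insert_at_def)

lemma insert_at_split:
  obtains A C where "xs = A @ C" "insert_at g ys xs = A @ ys @ C"
  using that[of "take g xs" "drop g xs"] by (simp add: insert_at_def)

lemma set_insert_at: "set (insert_at g ys xs) = set ys \<union> set xs"
  by (rule insert_at_split[of xs g ys]) auto

lemma distinct_insert_at:
  "distinct (insert_at g ys xs) \<longleftrightarrow> distinct ys \<and> distinct xs \<and> set ys \<inter> set xs = {}"
  by (rule insert_at_split[of xs g ys]) auto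

lemma nth_insert_at: "i < g \<Longrightarrow> g \<le> length xs \<Longrightarrow> insert_at g ys xs ! i = xs ! i"
  by (simp add: insert_at_def nth_append)

lemma zip_insert_at:
  "length ys = length zs \<Longrightarrow> length xs = length ws \<Longrightarrow>
   zip (insert_at g ys xs) (insert_at g zs ws) = insert_at g (zip ys zs) (zip xs ws)"
  by (simp add: insert_at_def zip_append take_zip drop_zip)

lemma map_insert_at: "map f (insert_at g ys xs) = insert_at g (map f ys) (map f xs)"
  by (simp add: insert_at_def take_map drop_map)

lemma insert_at_length: "insert_at (length xs) ys xs = xs @ ys"
  by (simp add: insert_at_def)

lemma insert_at_0: "insert_at 0 ys xs = ys @ xs"
  by (simp add: insert_at_def)

lemma insert_at_append: "g \<le> length xs \<Longrightarrow> insert_at g ys (xs @ zs) = insert_at g ys xs @ zs"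
  by (simp add: insert_at_def)

lemma ins2_eq_insert_at:
  "g1 \<le> g2 \<Longrightarrow> g2 \<le> length xs \<Longrightarrow> ins2 g1 ys1 g2 ys2 xs = insert_at g1 ys1 (insert_at g2 ys2 xs)"
  by (simp add: ins2_def insert_at_def min_def drop_take)

lemma ins2_commute: "g1 \<noteq> g2 \<Longrightarrow> ins2 g1 ys1 g2 ys2 xs = ins2 g2 ys2 g1 ys1 xs"
  by (simp add: ins2_def)

lemma map_ins2: "map f (ins2 g1 ys1 g2 ys2 xs) = ins2 g1 (map f ys1) g2 (map f ys2) (map f xs)"
  by (simp add: ins2_def take_map drop_map)

lemma filter_ins2:
  assumes "\<forall>y \<in> set ys1 \<union> set ys2. \<not> P y"
  shows "filter P (ins2 g1 ys1 g2 ys2 xs) = filter P xs"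
proof -
  have "take i xs @ take (j - i) (drop i xs) @ drop j xs = xs" if "i \<le> j" for i j
    using that take_add[of i "j - i" xs] append_take_drop_id[of j xs] by simp
  then have "filter P (take i xs) @ filter P (take (j - i) (drop i xs)) @ filter P (drop j xs) =
      filter P xs" if "i \<le> j" for i j
    using that by (metis filter_append)
  moreover have "filter P ys1 = []" "filter P ys2 = []"
    using assms by (auto simp: filter_empty_conv)
  ultimately show ?thesis
    by (simp add: ins2_def)
qed

lemma sorted_insert_at_replicate_nth:
  assumes "sorted w" "i < length w" "g = i \<or> g = Suc i"
  shows "sorted (insert_at g (replicate k (w ! i)) w)"
proof -
  have "\<forall>x \<in> set (take g w). x \<le> w ! i" "\<forall>x \<in> set (drop g w). w ! i \<le> x"
    using assms by (auto simp: in_set_conv_nth sorted_nth_mono)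
  moreover have "sorted (take g w @ drop g w)"
    using assms(1) by simp
  ultimately show ?thesis
    unfolding insert_at_def sorted_append by auto
qed

definition straight_word :: "'a list \<Rightarrow> bool" where
  "straight_word xs \<longleftrightarrow> (\<exists>P Q R. xs = P @ Q @ R \<and> distinct Q \<and> distinct (P @ R))"

lemma straight_word_iff_rotate:
  "straight_word xs \<longleftrightarrow> (\<exists>k A B. rotate k xs = A @ B \<and> distinct A \<and> distinct B)"
proof
  assume "straight_word xs"
  then obtain P Q R where "xs = P @ Q @ R" "distinct Q" "distinct (P @ R)"
    unfolding straight_word_def by blast
  moreover from this have "rotate (length P) xs = Q @ R @ P"
    by (simp add: rotate_append)
  ultimately show "\<exists>k A B. rotate k xs = A @ B \<and> distinct A \<and> distinct B"
    by (intro exI[of _ "length P"] exI[of _ Q] exI[of _ "R @ P"]) auto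
next
  assume "\<exists>k A B. rotate k xs = A @ B \<and> distinct A \<and> distinct B"
  then obtain k A B where rot: "rotate k xs = A @ B" and "distinct A" "distinct B"
    by blast
  define W where "W = take (k mod length xs) xs"
  define X where "X = drop (k mod length xs) xs"
  have "xs = W @ X" "X @ W = A @ B"
    using rot by (simp_all add: W_def X_def rotate_drop_take)
  then obtain us where "xs = W @ A @ us \<and> B = us @ W \<or> xs = us @ B @ X \<and> A = X @ us"
    by (auto simp: append_eq_append_conv2)
  then show "straight_word xs"
  proof (elim disjE conjE)
    assume "xs = W @ A @ us" "B = us @ W"
    then show ?thesis
      unfolding straight_word_def using \<open>distinct A\<close> \<open>distinct B\<close>
      by (intro exI[of _ W] exI[of _ A] exI[of _ us]) auto
  next
    assume "xs = us @ B @ X" "A = X @ us"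
    then show ?thesis
      unfolding straight_word_def using \<open>distinct A\<close> \<open>distinct B\<close>
      by (intro exI[of _ us] exI[of _ B] exI[of _ X]) auto
  qed
qed

lemma straight_word_rotate: "straight_word (rotate k xs) \<Longrightarrow> straight_word xs"
  unfolding straight_word_iff_rotate by (metis rotate_rotate)

lemma straight_word_filter:
  assumes "straight_word xs"
  shows "straight_word (filter P xs)"
proof -
  obtain A B C where "xs = A @ B @ C" "distinct B" "distinct (A @ C)"
    using assms unfolding straight_word_def by blast
  then show ?thesis
    unfolding straight_word_def
    by (intro exI[of _ "filter P A"] exI[of _ "filter P B"] exI[of _ "filter P C"])
      (simp add: distinct_filter flip: filter_append)
qed

lemma straight_position_iff_straight_word:
  "straight_position D \<longleftrightarrow> straight_word (map fst D)"
proof -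
  have "(\<exists>A B. rotate k D = A @ B \<and> distinct (map fst A) \<and> distinct (map fst B)) \<longleftrightarrow>
        (\<exists>A B. map fst (rotate k D) = A @ B \<and> distinct A \<and> distinct B)" for k
    by (auto simp: map_eq_append_conv)
  then show ?thesis
    by (simp only: straight_position_def straight_word_iff_rotate rotate_map)
qed

definition arc_tags :: "'a list \<Rightarrow> nat list \<Rightarrow> ('a \<times> bool) list" where
  "arc_tags xs w = zip xs (map (\<lambda>j. j = 1) w)"

text \<open>An arc labelling encodes a split xs = P @ Q @ R: w ! i is 0, 1 or 2 according as
  position i lies in P, Q or R. The tag w ! i = 1 separates the arc Q from the arc R @ P, so the
  tagged word is repetition-free iff both arcs are.\<close>
definition arc_labelling :: "'a list \<Rightarrow> nat list \<Rightarrow> bool" where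
  "arc_labelling xs w \<longleftrightarrow>
     length w = length xs \<and> sorted w \<and> set w \<subseteq> {0, 1, 2} \<and> distinct (arc_tags xs w)"

lemma sorted_three_values:
  fixes w :: "nat list"
  assumes "sorted w" "set w \<subseteq> {0, 1, 2}"
  shows "\<exists>a b c. w = replicate a 0 @ replicate b 1 @ replicate c 2"
  using assms
proof (induction w)
  case (Cons x w)
  then obtain a b c where w: "w = replicate a 0 @ replicate b 1 @ replicate c 2"
    by auto
  consider "x = 0" | "x = 1" "a = 0" | "x = 2" "a = 0" "b = 0"
    using Cons.prems unfolding w by (cases a; cases b) auto
  then show ?case
  proof cases
    case 1
    then show ?thesis by (metis replicate_Suc append_Cons w)
  next
    case 2
    then show ?thesis by (metis replicate_Suc append_Cons append_Nil replicate_0 w)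
  next
    case 3
    then show ?thesis by (metis replicate_Suc append_Nil replicate_0 w)
  qed
qed simp

lemma arc_tags_blocks:
  assumes "length P = a" "length Q = b" "length R = c"
  shows "arc_tags (P @ Q @ R) (replicate a 0 @ replicate b 1 @ replicate c 2) =
    map (\<lambda>x. (x, False)) P @ map (\<lambda>x. (x, True)) Q @ map (\<lambda>x. (x, False)) R"
  using assms by (simp add: arc_tags_def zip_append zip_replicate2)

lemma distinct_tagged_blocks:
  "distinct (map (\<lambda>x. (x, False)) P @ map (\<lambda>x. (x, True)) Q @ map (\<lambda>x. (x, False)) R) \<longleftrightarrow>
   distinct (P @ R) \<and> distinct Q"
  by (auto simp: distinct_map inj_on_def)

lemma straight_word_iff_arc_labelling:
  "straight_word xs \<longleftrightarrow> (\<exists>w. arc_labelling xs w)"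
proof
  assume "straight_word xs"
  then obtain P Q R where "xs = P @ Q @ R" "distinct Q" "distinct (P @ R)"
    unfolding straight_word_def by blast
  then have "arc_labelling xs (replicate (length P) 0 @ replicate (length Q) 1 @ replicate (length R) 2)"
    unfolding arc_labelling_def \<open>xs = P @ Q @ R\<close> arc_tags_blocks[OF refl refl refl]
    by (auto simp: distinct_map inj_on_def sorted_append)
  then show "\<exists>w. arc_labelling xs w" ..
next
  assume "\<exists>w. arc_labelling xs w"
  then obtain w where w: "arc_labelling xs w" ..
  then obtain a b c where w_eq: "w = replicate a 0 @ replicate b 1 @ replicate c 2"
    using sorted_three_values unfolding arc_labelling_def by blast
  define P Q R where "P = take a xs" and "Q = take b (drop a xs)" and "R = drop (a + b) xs"
  have "xs = P @ Q @ R"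
    unfolding P_def Q_def R_def by (metis append.assoc append_take_drop_id take_add)
  moreover have "length P = a" "length Q = b" "length R = c"
    using w unfolding arc_labelling_def w_eq P_def Q_def R_def by auto
  ultimately have "distinct (P @ R) \<and> distinct Q"
    using w unfolding arc_labelling_def w_eq by (simp only: arc_tags_blocks distinct_tagged_blocks)
  then show "straight_word xs"
    unfolding straight_word_def using \<open>xs = P @ Q @ R\<close> by blast
qed

lemma arc_tags_insert_at:
  assumes "length w = length xs" "g \<le> length xs"
  shows "arc_tags (insert_at g ys xs) (insert_at g (replicate (length ys) v) w) =
    insert_at g (map (\<lambda>y. (y, v = 1)) ys) (arc_tags xs w)"
  using assms by (simp add: arc_tags_def map_insert_at zip_insert_at zip_replicate2)

lemma arc_labelling_insert_at:
  assumes w: "arc_labelling xs w" and "i < length xs" "g = i \<or> g = Suc i" "distinct ys"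
    and fresh: "\<forall>y \<in> set ys. (y, w ! i = 1) \<notin> set (arc_tags xs w)"
  shows "arc_labelling (insert_at g ys xs) (insert_at g (replicate (length ys) (w ! i)) w)"
proof -
  have len: "length w = length xs" "g \<le> length xs"
    using assms(2,3) w by (auto simp: arc_labelling_def)
  have "w ! i \<in> {0, 1, 2}"
    using w assms(2) len unfolding arc_labelling_def by (metis nth_mem subsetD)
  then have "set (insert_at g (replicate (length ys) (w ! i)) w) \<subseteq> {0, 1, 2}"
    using w by (auto simp: arc_labelling_def set_insert_at)
  moreover have "sorted (insert_at g (replicate (length ys) (w ! i)) w)"
    using w assms(2,3) len by (simp add: arc_labelling_def sorted_insert_at_replicate_nth)
  moreover have "distinct (map (\<lambda>y. (y, w ! i = 1)) ys)"
    using \<open>distinct ys\<close> by (simp add: distinct_map inj_on_def)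
  ultimately show ?thesis
    using w fresh len
    by (auto simp: arc_labelling_def length_insert_at arc_tags_insert_at distinct_insert_at)
qed

lemma arc_labelling_repeat_sides:
  assumes "arc_labelling xs w" "i < length xs" "j < length xs" "i \<noteq> j" "xs ! i = xs ! j"
  shows "(w ! i = 1) \<noteq> (w ! j = 1)"
proof
  assume "(w ! i = 1) = (w ! j = 1)"
  then have "arc_tags xs w ! i = arc_tags xs w ! j"
    using assms by (simp add: arc_labelling_def arc_tags_def)
  moreover have "distinct (arc_tags xs w)" "i < length (arc_tags xs w)" "j < length (arc_tags xs w)"
    using assms by (auto simp: arc_labelling_def arc_tags_def)
  ultimately show False
    using \<open>i \<noteq> j\<close> nth_eq_iff_index_eq by blast
qed

lemma straight_word_insert_at_insert_at:
  assumes "straight_word xs"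
    and "i1 < length xs" "i2 < length xs" "i1 \<noteq> i2" "xs ! i1 = xs ! i2"
    and "g1 = i1 \<or> g1 = Suc i1" "g2 = i2 \<or> g2 = Suc i2" "g1 < g2"
    and "distinct ys1" "distinct ys2" "set ys1 \<inter> set xs = {}" "set ys2 \<inter> set xs = {}"
  shows "straight_word (insert_at g1 ys1 (insert_at g2 ys2 xs))"
proof -
  obtain w where w: "arc_labelling xs w"
    using assms(1) straight_word_iff_arc_labelling by blast
  have sides: "(w ! i1 = 1) \<noteq> (w ! i2 = 1)"
    using arc_labelling_repeat_sides[OF w] assms(2-5) by blast
  have not_in_tags: "(y, s) \<notin> set (arc_tags xs w)" if "y \<notin> set xs" for y s
    using that by (auto simp: arc_tags_def dest: set_zip_leftD)
  define xs2 where "xs2 = insert_at g2 ys2 xs"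
  define w2 where "w2 = insert_at g2 (replicate (length ys2) (w ! i2)) w"
  have w2: "arc_labelling xs2 w2"
    unfolding xs2_def w2_def
    by (rule arc_labelling_insert_at) (use w assms not_in_tags in auto)
  have "g2 \<le> length xs" "length w = length xs"
    using assms(3,7) w by (auto simp: arc_labelling_def)
  then have "w2 ! i1 = w ! i1"
    "arc_tags xs2 w2 = insert_at g2 (map (\<lambda>y. (y, w ! i2 = 1)) ys2) (arc_tags xs w)"
    using assms(6,8) by (auto simp: w2_def xs2_def nth_insert_at arc_tags_insert_at)
  then have fresh1: "\<forall>y \<in> set ys1. (y, w2 ! i1 = 1) \<notin> set (arc_tags xs2 w2)"
    using sides assms(11) not_in_tags by (auto simp: set_insert_at)
  have "arc_labelling (insert_at g1 ys1 xs2) (insert_at g1 (replicate (length ys1) (w2 ! i1)) w2)"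
    by (rule arc_labelling_insert_at[OF w2 _ _ _ fresh1])
      (use assms in \<open>auto simp: xs2_def length_insert_at\<close>)
  then show ?thesis
    unfolding xs2_def straight_word_iff_arc_labelling by blast
qed

lemma straight_word_insert_on_edges:
  assumes "straight_word xs" "e1 < e2" "e2 < length xs"
    and "i1 = e1 \<or> i1 = Suc e1 mod length xs" "i2 = e2 \<or> i2 = Suc e2 mod length xs"
    and "i1 \<noteq> i2" "xs ! i1 = xs ! i2"
    and "distinct ys1" "distinct ys2" "set ys1 \<inter> set xs = {}" "set ys2 \<inter> set xs = {}"
  shows "straight_word (insert_at (Suc e1) ys1 (insert_at (Suc e2) ys2 xs))"
proof -
  have i1: "i1 = e1 \<or> i1 = Suc e1" "i1 < length xs"
    using assms(2-4) by auto
  show ?thesis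
  proof (cases "Suc e2 = length xs \<and> i2 = 0")
    case True
    \<comment> \<open>the last edge closes the cycle; rotating the new letters to the front makes it linear\<close>
    let ?xs1 = "insert_at (Suc e1) ys1 xs"
    have "insert_at (Suc e1) ys1 (insert_at (Suc e2) ys2 xs) = ?xs1 @ ys2"
      using True assms(2) by (simp add: insert_at_length insert_at_append)
    then have "rotate (length ?xs1) (insert_at (Suc e1) ys1 (insert_at (Suc e2) ys2 xs)) =
        insert_at 0 ys2 ?xs1"
      by (simp add: rotate_append insert_at_0)
    moreover have "straight_word (insert_at 0 ys2 ?xs1)"
      using assms True i1 by (intro straight_word_insert_at_insert_at[of xs 0 i1]) auto
    ultimately show ?thesis
      by (metis straight_word_rotate)
  next
    case False
    then have "i2 = e2 \<or> i2 = Suc e2" "i2 < length xs"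
      using assms(3,5) by (cases "Suc e2 = length xs"; auto)+
    then show ?thesis
      using assms i1 by (intro straight_word_insert_at_insert_at[of xs i1 i2]) auto
  qed
qed

lemma straight_word_ins2:
  assumes "straight_word xs" "e1 < length xs" "e2 < length xs" "e1 \<noteq> e2"
    and "i1 = e1 \<or> i1 = Suc e1 mod length xs" "i2 = e2 \<or> i2 = Suc e2 mod length xs"
    and "i1 \<noteq> i2" "xs ! i1 = xs ! i2"
    and "distinct ys1" "distinct ys2" "set ys1 \<inter> set xs = {}" "set ys2 \<inter> set xs = {}"
  shows "straight_word (ins2 (Suc e1) ys1 (Suc e2) ys2 xs)"
proof (cases "e1 < e2")
  case True
  then show ?thesis
    using assms straight_word_insert_on_edges[of xs e1 e2 i1 i2] by (simp add: ins2_eq_insert_at)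
next
  case False
  have "ins2 (Suc e1) ys1 (Suc e2) ys2 xs = ins2 (Suc e2) ys2 (Suc e1) ys1 xs"
    using assms(4) by (simp add: ins2_commute)
  also have "\<dots> = insert_at (Suc e2) ys2 (insert_at (Suc e1) ys1 xs)"
    using False assms(2) by (simp add: ins2_eq_insert_at)
  finally show ?thesis
    using False assms by (simp add: straight_word_insert_on_edges)
qed

lemma drot_other_visit:
  assumes "knot_code D" "d \<in> darts D"
  shows "drot D d \<in> darts D" "fst (drot D d) \<noteq> fst d" "lbl D (fst (drot D d)) = lbl D (fst d)"
proof -
  obtain i b where d: "d = (i, b)" "i < length D"
    using assms(2) by (auto simp: darts_def)
  define S where "S = {j. j < length D \<and> lbl D j = lbl D i}"
  have "lbl D i \<in> crossings D"
    using d by (simp add: crossings_def lbl_def)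
  then have "card S = 2" "i \<in> S"
    using assms(1) d by (auto simp: knot_code_def S_def)
  then have "card (S - {i}) = 1"
    by simp
  then obtain j where j: "S - {i} = {j}"
    by (rule card_1_singletonE)
  then have "partner D i = j"
    unfolding partner_def S_def by (rule_tac the_equality) blast+
  moreover have "j < length D" "j \<noteq> i" "lbl D j = lbl D i"
    using j by (auto simp: S_def)
  ultimately show "drot D d \<in> darts D" "fst (drot D d) \<noteq> fst d"
    "lbl D (fst (drot D d)) = lbl D (fst d)"
    by (auto simp: d drot_def darts_def)
qed

lemma dedge_adjacent:
  assumes "d \<in> darts D"
  shows "dedge D d < length D" "fst d = dedge D d \<or> fst d = Suc (dedge D d) mod length D"
proof -
  obtain i b where d: "d = (i, b)" "i < length D"
    using assms by (auto simp: darts_def)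
  then have n: "0 < length D"
    by linarith
  with d show "dedge D d < length D"
    by (simp add: dedge_def)
  show "fst d = dedge D d \<or> fst d = Suc (dedge D d) mod length D"
  proof (cases b)
    case True
    then show ?thesis
      using d by (simp add: dedge_def)
  next
    case False
    have "Suc ((i + length D - 1) mod length D) mod length D = (i + length D) mod length D"
      using n by (simp add: mod_Suc_eq)
    then show ?thesis
      using d False by (simp add: dedge_def)
  qed
qed

lemma map_fst_add_twists:
  "map fst (add_twists D d Y) =
    ins2 (Suc (dedge D d)) (if snd d then Y else rev Y)
      (Suc (dedge D (drot D d))) (if snd (drot D d) then Y else rev Y) (map fst D)"
  by (simp add: add_twists_def Let_def map_ins2 comp_def map_nth flip: rev_map)

lemma straight_position_add_twists:
  assumes "knot_code D" "d \<in> darts D" "dedge D d \<noteq> dedge D (drot D d)"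
    and "distinct Y" "set Y \<inter> crossings D = {}" "straight_position D"
  shows "straight_position (add_twists D d Y)"
proof -
  have "map fst D ! fst (drot D d) = map fst D ! fst d"
    using drot_other_visit[OF assms(1,2)] assms(2) by (auto simp: lbl_def darts_def)
  then show ?thesis
    using assms dedge_adjacent[OF assms(2)] dedge_adjacent[OF drot_other_visit(1)[OF assms(1,2)]]
      drot_other_visit(2)[OF assms(1,2)]
    unfolding straight_position_iff_straight_word map_fst_add_twists
    by (intro straight_word_ins2[of _ _ _ "fst d" "fst (drot D d)"])
      (auto simp: crossings_def Int_commute)
qed

lemma straight_position_remove_twists:
  assumes "set Y \<inter> crossings D = {}" "straight_position (add_twists D d Y)"
  shows "straight_position D"
proof -
  have "filter (\<lambda>x. x \<notin> set Y) (map fst (add_twists D d Y)) = map fst D"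
    unfolding map_fst_add_twists using assms(1)
    by (auto simp: filter_ins2 filter_id_conv crossings_def)
  then show ?thesis
    using straight_word_filter assms(2) unfolding straight_position_iff_straight_word by metis
qed

theorem lemma4p3:
  assumes "knot_diagram D"
    and "twist_increase D D'"
  shows "straight_position D \<longleftrightarrow> straight_position D'"
proof -
  have "knot_code D"
    using assms(1) by (simp add: knot_diagram_def)
  moreover obtain d Y where "d \<in> darts D" "dedge D d \<noteq> dedge D (drot D d)"
    and "distinct Y" "set Y \<inter> crossings D = {}" and "D' = add_twists D d Y"
    using assms(2) unfolding twist_increase_def by blast
  ultimately show ?thesis
    using straight_position_add_twists straight_position_remove_twists by blast
qed

end
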